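(* Let $\phi\colon G'\to G$ be a covering map of digraphs such that every vertex and every edge of $G$ has exactly $d$ preimages, and let $\mathcal F$ be a sheaf on $G$. Then ${\rm m.e.}(\phi^*\mathcal F)=d\cdot{\rm m.e.}(\mathcal F)$. Moreover, if the maximum excess of $\mathcal F$ is attained at $U=\bigoplus_{v\in V_G}U_v\subset\mathcal F(V)$ (with $U_v\subset\mathcal F(v)$), then the maximum excess of $\phi^*\mathcal F$ is attained at $\phi^{-1}(U)=\bigoplus_{v'\in V_{G'}}U_{\phi(v')}$.
   Context: Digraphs are finite, with tail/head maps, multiple edges and loops allowed. A sheaf $\mathcal F$ on $G$: finite-dimensional $\mathbb F$-vector spaces $\mathcal F(P)$, $P\in V_G\sqcup E_G$, with linear maps $\mathcal F(t,e)\colon\mathcal F(e)\to\mathcal F(t_Ge)$, $\mathcal F(h,e)\colon\mathcal F(e)\to\mathcal F(h_Ge)$; $\mathcal F(V)=\bigoplus_v\mathcal F(v)$, $\mathcal F(E)=\bigoplus_e\mathcal F(e)$; $d_h,d_t\colon\mathcal F(E)\to\mathcal F(V)$ send the summand $\mathcal F(e)$ into $\mathcal F(h_Ge)$ resp. $\mathcal F(t_Ge)$ via the restriction maps. For a subspace $U\subset\mathcal F(V)$, $\Gamma_{\rm ht}(U)=\bigoplus_e\{w\in\mathcal F(e):d_hw\in U,\ d_tw\in U\}$, ${\rm excess}(\mathcal F,U)=\dim\Gamma_{\rm ht}(U)-\dim U$, ${\rm m.e.}(\mathcal F)=\max_U{\rm excess}(\mathcal F,U)$. A covering map $\phi\colon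 G'\to G$ is a digraph morphism mapping, for each vertex $v$, the edges with head $v$ bijectively onto those with head $\phi(v)$ and the edges with tail $v$ bijectively onto those with tail $\phi(v)$. The pullback $\phi^*\mathcal F$ has values $\mathcal F(\phi(P))$ and restriction maps $\mathcal F(h,\phi(e)),\mathcal F(t,\phi(e))$. *)

theory Defs
  imports Main "HOL-Library.Function_Algebras" "Graph_Theory.Digraph"
begin

text \<open>Digraphs: Graph_Theory's pre_digraph (abstract arcs with tail/head maps, so
multiple edges and loops are allowed), assumed finite via fin_digraph.

A sheaf over a field 'k is given in coordinates: F(v) = 'k^(vdim v), F(e) = 'k^(edim e),
and the restriction maps F(t,e): F(e) -> F(tail e), F(h,e): F(e) -> F(head e) are
given by matrices rest_t e, rest_h e (entry (i,j), i < vdim of the endpoint, j < edim e).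
Vectors in 'k^n are functions nat => 'k vanishing from n on.\<close>

record ('v,'e,'k) sheaf =
  vdim :: "'v \<Rightarrow> nat"
  edim :: "'e \<Rightarrow> nat"
  rest_t :: "'e \<Rightarrow> nat \<Rightarrow> nat \<Rightarrow> 'k"
  rest_h :: "'e \<Rightarrow> nat \<Rightarrow> nat \<Rightarrow> 'k"

definition fscale :: "'k::field \<Rightarrow> ('a \<Rightarrow> 'k) \<Rightarrow> ('a \<Rightarrow> 'k)" where
  "fscale c f = (\<lambda>x. c * f x)"

abbreviation fsubspace :: "('a \<Rightarrow> 'k::field) set \<Rightarrow> bool" where
  "fsubspace \<equiv> module.subspace (fscale :: 'k \<Rightarrow> _)"

abbreviation fdim :: "('a \<Rightarrow> 'k::field) set \<Rightarrow> nat" where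
  "fdim \<equiv> vector_space.dim (fscale :: 'k \<Rightarrow> _)"

definition stalkV :: "('v,'e,'k::field) sheaf \<Rightarrow> 'v \<Rightarrow> (nat \<Rightarrow> 'k) set" where
  "stalkV F v = {x. \<forall>i. vdim F v \<le> i \<longrightarrow> x i = 0}"

text \<open>F(V) = direct sum of the F(v), and F(E) = direct sum of the F(e).\<close>
definition totV :: "('v,'e) pre_digraph \<Rightarrow> ('v,'e,'k::field) sheaf \<Rightarrow> ('v \<times> nat \<Rightarrow> 'k) set" where
  "totV G F = {x. \<forall>v i. (v \<notin> verts G \<or> vdim F v \<le> i) \<longrightarrow> x (v,i) = 0}"

definition totE :: "('v,'e) pre_digraph \<Rightarrow> ('v,'e,'k::field) sheaf \<Rightarrow> ('e \<times> nat \<Rightarrow> 'k) set" where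
  "totE G F = {w. \<forall>e j. (e \<notin> arcs G \<or> edim F e \<le> j) \<longrightarrow> w (e,j) = 0}"

definition d_h :: "('v,'e) pre_digraph \<Rightarrow> ('v,'e,'k::field) sheaf \<Rightarrow> ('e \<times> nat \<Rightarrow> 'k) \<Rightarrow> ('v \<times> nat \<Rightarrow> 'k)" where
  "d_h G F w = (\<lambda>(v,i). if v \<in> verts G \<and> i < vdim F v
      then (\<Sum>e\<in>{e\<in>arcs G. head G e = v}. \<Sum>j<edim F e. rest_h F e i j * w (e,j)) else 0)"

definition d_t :: "('v,'e) pre_digraph \<Rightarrow> ('v,'e,'k::field) sheaf \<Rightarrow> ('e \<times> nat \<Rightarrow> 'k) \<Rightarrow> ('v \<times> nat \<Rightarrow> 'k)" where
  "d_t G F w = (\<lambda>(v,i). if v \<in> verts G \<and> i < vdim F v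
      then (\<Sum>e\<in>{e\<in>arcs G. tail G e = v}. \<Sum>j<edim F e. rest_t F e i j * w (e,j)) else 0)"

definition ecomp :: "'e \<Rightarrow> ('e \<times> nat \<Rightarrow> 'k::field) \<Rightarrow> ('e \<times> nat \<Rightarrow> 'k)" where
  "ecomp e w = (\<lambda>(e',j). if e' = e then w (e',j) else 0)"

definition Gamma_ht :: "('v,'e) pre_digraph \<Rightarrow> ('v,'e,'k::field) sheaf \<Rightarrow> ('v \<times> nat \<Rightarrow> 'k) set \<Rightarrow> ('e \<times> nat \<Rightarrow> 'k) set" where
  "Gamma_ht G F U = {w \<in> totE G F. \<forall>e\<in>arcs G.
      d_h G F (ecomp e w) \<in> U \<and> d_t G F (ecomp e w) \<in> U}"

definition excess :: "('v,'e) pre_digraph \<Rightarrow> ('v,'e,'k::field) sheaf \<Rightarrow> ('v \<times> nat \<Rightarrow> 'k) set \<Rightarrow> int" where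
  "excess G F U = int (fdim (Gamma_ht G F U)) - int (fdim U)"

definition admissible :: "('v,'e) pre_digraph \<Rightarrow> ('v,'e,'k::field) sheaf \<Rightarrow> ('v \<times> nat \<Rightarrow> 'k) set \<Rightarrow> bool" where
  "admissible G F U \<longleftrightarrow> fsubspace U \<and> U \<subseteq> totV G F"

definition max_excess :: "('v,'e) pre_digraph \<Rightarrow> ('v,'e,'k::field) sheaf \<Rightarrow> int" where
  "max_excess G F = Max {excess G F U | U. admissible G F U}"

definition attains_max_excess :: "('v,'e) pre_digraph \<Rightarrow> ('v,'e,'k::field) sheaf \<Rightarrow> ('v \<times> nat \<Rightarrow> 'k) set \<Rightarrow> bool" where
  "attains_max_excess G F U \<longleftrightarrow> admissible G F U \<and> excess G F U = max_excess G F"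

definition dsum :: "('v,'e) pre_digraph \<Rightarrow> ('v,'e,'k::field) sheaf \<Rightarrow> ('v \<Rightarrow> (nat \<Rightarrow> 'k) set) \<Rightarrow> ('v \<times> nat \<Rightarrow> 'k) set" where
  "dsum G F Uv = {x \<in> totV G F. \<forall>v\<in>verts G. (\<lambda>i. x (v,i)) \<in> Uv v}"

definition covering_map :: "('v2,'e2) pre_digraph \<Rightarrow> ('v,'e) pre_digraph \<Rightarrow> ('v2 \<Rightarrow> 'v) \<Rightarrow> ('e2 \<Rightarrow> 'e) \<Rightarrow> bool" where
  "covering_map G' G fv fe \<longleftrightarrow>
     (\<forall>v\<in>verts G'. fv v \<in> verts G) \<and>
     (\<forall>e\<in>arcs G'. fe e \<in> arcs G \<and> tail G (fe e) = fv (tail G' e) \<and> head G (fe e) = fv (head G' e)) \<and>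
     (\<forall>v\<in>verts G'. bij_betw fe {e\<in>arcs G'. head G' e = v} {e\<in>arcs G. head G e = fv v}
                 \<and> bij_betw fe {e\<in>arcs G'. tail G' e = v} {e\<in>arcs G. tail G e = fv v})"

definition pullback :: "('v2 \<Rightarrow> 'v) \<Rightarrow> ('e2 \<Rightarrow> 'e) \<Rightarrow> ('v,'e,'k) sheaf \<Rightarrow> ('v2,'e2,'k) sheaf" where
  "pullback fv fe F = \<lparr> vdim = (\<lambda>v. vdim F (fv v)), edim = (\<lambda>e. edim F (fe e)),
     rest_t = (\<lambda>e. rest_t F (fe e)), rest_h = (\<lambda>e. rest_h F (fe e)) \<rparr>"

end

theory Submission
  imports Defs "HOL-Combinatorics.Multiset_Permutations"
begin

(* The excess of U depends only on its "coordinate part": replacing U by the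
   direct sum of the subspaces U_v = U \<inter> F(v) does not change Gamma_ht(U) and can only
   shrink U.  Hence m.e.(F) is the maximum of the excess of families (U_v)_v, which is a sum
   of local terms dim Gamma_e - dim U_v.

   Lower bound: pulling an optimal family back along phi repeats every local term d times,
   so m.e.(phi^*F) >= d * m.e.(F).

   Upper bound: let H be the "Galois closure" of the cover, whose vertices over v are the
   orderings of the fibre of v (and similarly for edges).  H covers G with degree d!, and
   the d projections "take the i-th entry of the ordering" turn a family on G' into d
   families on H whose excesses add up to d! times its excess; so
   d! * m.e.(phi^*F) <= d * m.e.(F on H).  The symmetric group S_d acts on H by
   automorphisms; by supermodularity of the excess, a maximiser of maximal total dimension
   is S_d-invariant, hence is pulled back from G, so m.e.(F on H) <= d! * m.e.(F). *)


section \<open>Linear algebra in coordinate spaces\<close>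

interpretation fs: vector_space "fscale :: 'k::field \<Rightarrow> ('a \<Rightarrow> 'k) \<Rightarrow> ('a \<Rightarrow> 'k)"
  by unfold_locales (auto simp: fscale_def fun_eq_iff algebra_simps)

text \<open>The ambient function spaces may be infinite-dimensional, so the finite-dimensional
  dimension theory is stated relative to a subspace contained in a finite span.\<close>

context vector_space begin

lemma dim_le_of_subset:
  assumes "finite W" "T \<subseteq> span W" "S \<subseteq> T"
  shows "dim S \<le> dim T"
proof -
  obtain B where B: "B \<subseteq> T" "independent B" "T \<subseteq> span B" "card B = dim T"
    by (rule basis_exists)
  have "finite B" using independent_span_bound[OF assms(1) B(2)] B(1) assms(2) by blast
  moreover have "S \<subseteq> span B" using assms(3) B(3) by (rule order_trans)
  ultimately show ?thesis using dim_le_card[of S B] B(4) by simp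
qed

lemma subspace_eq_of_dim_le:
  assumes "subspace S" "finite W" "T \<subseteq> span W" "S \<subseteq> T" "dim T \<le> dim S"
  shows "T \<subseteq> S"
proof
  fix t assume t: "t \<in> T"
  show "t \<in> S"
  proof (rule ccontr)
    assume "t \<notin> S"
    obtain B where B: "B \<subseteq> S" "independent B" "S \<subseteq> span B" "card B = dim S"
      by (rule basis_exists)
    have "t \<notin> span B" using \<open>t \<notin> S\<close> span_minimal[OF B(1) assms(1)] by auto
    then have ind: "independent (insert t B)" using independent_insertI B(2) by blast
    have sub: "insert t B \<subseteq> T" using t B(1) assms(4) by blast
    have "insert t B \<subseteq> span W" using sub assms(3) by (rule order_trans)
    then have fin: "finite (insert t B)"
      using independent_span_bound[OF assms(2) ind] by simp
    have "card (insert t B) \<le> dim T"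
      using dim_le_of_subset[OF assms(2,3) sub] dim_eq_card_independent[OF ind] by simp
    moreover have "t \<notin> B" using \<open>t \<notin> S\<close> B(1) by blast
    ultimately show False using B(4) assms(5) fin by simp
  qed
qed

lemma dim_zero: "dim {0} = 0"
proof -
  have "dim {0} = dim {}" by (rule span_eq_dim) simp
  then show ?thesis using dim_eq_card_independent[OF independent_empty] by simp
qed

text \<open>Grassmann's formula dim(S + T) + dim(S \<inter> T) = dim S + dim T: a basis of S \<inter> T is
  extended to bases of S and of T, whose union is a basis of S + T.\<close>

lemma dim_sum_inter:
  assumes S: "subspace S" "finite WS" "S \<subseteq> span WS"
    and T: "subspace T" "finite WT" "T \<subseteq> span WT"
  shows "dim {x + y |x y. x \<in> S \<and> y \<in> T} + dim (S \<inter> T) = dim S + dim T"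
proof -
  obtain B where B: "B \<subseteq> S \<inter> T" "independent B" "S \<inter> T \<subseteq> span B" "card B = dim (S \<inter> T)"
    by (rule basis_exists)
  obtain BS where BS: "B \<subseteq> BS" "BS \<subseteq> S" "independent BS" "S \<subseteq> span BS"
    using maximal_independent_subset_extend[of B S] B by blast
  obtain BT where BT: "B \<subseteq> BT" "BT \<subseteq> T" "independent BT" "T \<subseteq> span BT"
    using maximal_independent_subset_extend[of B T] B by blast
  have "BS \<subseteq> span WS" using BS(2) S(3) by (rule order_trans)
  then have finBS: "finite BS" using independent_span_bound[OF S(2) BS(3)] by simp
  have "BT \<subseteq> span WT" using BT(2) T(3) by (rule order_trans)
  then have finBT: "finite BT" using independent_span_bound[OF T(2) BT(3)] by simp
  have spS: "span BS = S" using span_subspace[OF BS(2) BS(4) S(1)] .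
  have spT: "span BT = T" using span_subspace[OF BT(2) BT(4) T(1)] .
  have int: "BS \<inter> BT = B"
  proof
    show "BS \<inter> BT \<subseteq> B"
    proof
      fix x assume x: "x \<in> BS \<inter> BT"
      show "x \<in> B"
      proof (rule ccontr)
        assume "x \<notin> B"
        then have "B \<subseteq> BS - {x}" using BS(1) by blast
        moreover have "x \<in> span B" using x BS(2) BT(2) B(3) by blast
        ultimately have "x \<in> span (BS - {x})" using span_mono by blast
        then show False using BS(3) x unfolding dependent_def by blast
      qed
    qed
    show "B \<subseteq> BS \<inter> BT" using BS(1) BT(1) by blast
  qed
  text \<open>The new vectors of BT stay independent of BS, since any relation would put a
    non-trivial combination of them into S \<inter> T = span B.\<close>
  have indep_ext: "independent (BS \<union> Y)" if "Y \<subseteq> BT - B" for Y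
  proof -
    have "finite Y" using that finBT finite_subset by blast
    then show ?thesis using that
    proof (induction Y rule: finite_induct)
      case empty then show ?case using BS(3) by simp
    next
      case (insert y Y)
      have y: "y \<in> BT" "y \<notin> B" "y \<notin> Y" using insert by auto
      have "y \<notin> span (BS \<union> Y)"
      proof
        assume "y \<in> span (BS \<union> Y)"
        then obtain s z where sz: "y = s + z" "s \<in> span BS" "z \<in> span Y" using span_Un by blast
        have "span Y \<subseteq> T" using insert(4) spT span_mono by blast
        then have zT: "z \<in> T" using sz by blast
        have sS: "s \<in> S" using sz spS by blast
        have "s = y - z" using sz by simp
        then have sT: "s \<in> T" using subspace_diff[OF T(1)] y(1) BT(2) zT by blast
        have "s \<in> span B" using sS sT B(3) by blast
        then have "s \<in> span (B \<union> Y)" using span_mono[of B "B \<union> Y"] by blast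
        moreover have "z \<in> span (B \<union> Y)" using sz span_mono[of Y "B \<union> Y"] by blast
        ultimately have "y \<in> span (B \<union> Y)" using sz span_add by simp
        moreover have "B \<union> Y \<subseteq> BT - {y}" using BT(1) insert y by blast
        ultimately have "y \<in> span (BT - {y})" using span_mono by blast
        then show False using BT(3) y(1) dependent_def by blast
      qed
      then show ?case using independent_insertI[OF _ insert.IH] insert.prems by simp
    qed
  qed
  have indUn: "independent (BS \<union> BT)"
  proof -
    have "BS \<union> (BT - B) = BS \<union> BT" using BS(1) by blast
    then show ?thesis using indep_ext[of "BT - B"] by simp
  qed
  let ?ST = "{x + y |x y. x \<in> S \<and> y \<in> T}"
  have "BS \<union> BT \<subseteq> ?ST"
  proof
    fix x assume "x \<in> BS \<union> BT"
    then show "x \<in> ?ST"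
    proof
      assume "x \<in> BS"
      then have "x \<in> S" using BS(2) by blast
      then show ?thesis using subspace_0[OF T(1)] by force
    next
      assume "x \<in> BT"
      then have "x \<in> T" using BT(2) by blast
      then show ?thesis using subspace_0[OF S(1)] by force
    qed
  qed
  moreover have "?ST \<subseteq> span (BS \<union> BT)" using span_Un spS spT by blast
  ultimately have "card (BS \<union> BT) = dim ?ST" using basis_card_eq_dim[OF _ _ indUn] by blast
  moreover have "card BS + card BT = card (BS \<union> BT) + card (BS \<inter> BT)"
    using card_Un_Int[OF finBS finBT] .
  moreover have "card BS = dim S" "card BT = dim T"
    using basis_card_eq_dim[OF BS(2,4,3)] basis_card_eq_dim[OF BT(2,4,3)] .
  ultimately show ?thesis using int B(4) by simp
qed

end

abbreviation findim :: "('a \<Rightarrow> 'k::field) set \<Rightarrow> bool" where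
  "findim S \<equiv> \<exists>W. finite W \<and> S \<subseteq> fs.span W"

lemma findim_subset: "findim T \<Longrightarrow> S \<subseteq> T \<Longrightarrow> findim S"
  by (meson order_trans)

lemma fdim_mono:
  assumes "findim T" "S \<subseteq> T"
  shows "fdim S \<le> fdim T"
proof -
  obtain W where "finite W" "T \<subseteq> fs.span W" using assms(1) by blast
  then show ?thesis using fs.dim_le_of_subset assms(2) by blast
qed

lemma sum_fun_apply: "(sum f I) x = sum (\<lambda>i. f i x) I"
  by (induction I rule: infinite_finite_induct) auto

text \<open>Functions vanishing outside a finite set P form a finite-dimensional space: they are
  spanned by the indicator functions of the points of P.\<close>

lemma findim_vanishing:
  assumes "finite P"
  shows "findim {x :: 'a \<Rightarrow> 'k::field. \<forall>q. q \<notin> P \<longrightarrow> x q = 0}"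
proof (intro exI conjI)
  let ?W = "(\<lambda>p. (\<lambda>q. if q = p then (1::'k) else 0)) ` P"
  show "finite ?W" using assms by simp
  show "{x. \<forall>q. q \<notin> P \<longrightarrow> x q = 0} \<subseteq> fs.span ?W"
  proof
    fix x :: "'a \<Rightarrow> 'k" assume "x \<in> {x. \<forall>q. q \<notin> P \<longrightarrow> x q = 0}"
    then have x: "x q = 0" if "q \<notin> P" for q using that by simp
    have "x = (\<Sum>p\<in>P. fscale (x p) (\<lambda>q. if q = p then 1 else 0))"
    proof
      fix q
      show "x q = (\<Sum>p\<in>P. fscale (x p) (\<lambda>q. if q = p then 1 else 0)) q"
        using x[of q] assms by (auto simp: sum_fun_apply fscale_def if_distrib cong: if_cong)
    qed
    also have "\<dots> \<in> fs.span ?W"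
      by (intro fs.span_sum fs.span_scale fs.span_base) auto
    finally show "x \<in> fs.span ?W" .
  qed
qed

definition coord_space :: "nat \<Rightarrow> (nat \<Rightarrow> 'k::field) set" where
  "coord_space n = {y. \<forall>j. n \<le> j \<longrightarrow> y j = 0}"

lemma stalkV_coord_space: "stalkV F v = coord_space (vdim F v)"
  by (simp add: stalkV_def coord_space_def)

lemma coord_space_subspace: "fsubspace (coord_space n)"
  unfolding fs.subspace_def coord_space_def fscale_def by auto

lemma coord_space_add: "y \<in> coord_space n \<Longrightarrow> z \<in> coord_space n \<Longrightarrow> y + z \<in> coord_space n"
  by (auto simp: coord_space_def)

lemma findim_coord_space: "findim (coord_space n :: (nat \<Rightarrow> 'k::field) set)"
proof -
  have "coord_space n = {x :: nat \<Rightarrow> 'k. \<forall>q. q \<notin> {..<n} \<longrightarrow> x q = 0}"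
    by (auto simp: coord_space_def not_less)
  then show ?thesis using findim_vanishing[of "{..<n}", OF finite_lessThan] by (simp only:)
qed

lemma findim_in_coord_space: "S \<subseteq> coord_space n \<Longrightarrow> findim S"
  by (rule findim_subset[OF findim_coord_space])


text \<open>The direct sum \<Oplus>_{a \<in> A} W_a, realised in \<open>'a \<times> nat \<Rightarrow> 'k\<close>: the a-th block of an
  element lies in W_a for a \<in> A and vanishes for a \<notin> A.\<close>

definition blocks :: "'a set \<Rightarrow> ('a \<Rightarrow> (nat \<Rightarrow> 'k::field) set) \<Rightarrow> ('a \<times> nat \<Rightarrow> 'k) set" where
  "blocks A W = {x. \<forall>a. (\<lambda>i. x (a,i)) \<in> (if a \<in> A then W a else {0})}"

definition embed :: "'a \<Rightarrow> (nat \<Rightarrow> 'k::field) \<Rightarrow> ('a \<times> nat \<Rightarrow> 'k)" where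
  "embed a y = (\<lambda>(b,i). if b = a then y i else 0)"

definition sumspace :: "('a \<Rightarrow> 'k::field) set \<Rightarrow> ('a \<Rightarrow> 'k) set \<Rightarrow> ('a \<Rightarrow> 'k) set" where
  "sumspace S T = {x + y |x y. x \<in> S \<and> y \<in> T}"

lemma block_add: "(\<lambda>i. (x + y) (a, i)) = (\<lambda>i. x (a,i)) + (\<lambda>i. y (a,i))"
  by (simp add: fun_eq_iff)

lemma blocks_mono: "\<forall>a\<in>A. W a \<subseteq> V a \<Longrightarrow> blocks A W \<subseteq> blocks A V"
  unfolding blocks_def by (auto split: if_splits)

lemma blocks_subspace:
  assumes "\<forall>a\<in>A. fsubspace (W a)"
  shows "fsubspace (blocks A W)"
  unfolding fs.subspace_def
proof (intro conjI ballI allI)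
  show "0 \<in> blocks A W"
    using assms fs.subspace_0 unfolding blocks_def by (auto simp flip: zero_fun_def)
  fix x y assume x: "x \<in> blocks A W" and y: "y \<in> blocks A W"
  show "x + y \<in> blocks A W" unfolding blocks_def
  proof (intro CollectI allI)
    fix a
    have "(\<lambda>i. x (a,i)) \<in> (if a \<in> A then W a else {0})" "(\<lambda>i. y (a,i)) \<in> (if a \<in> A then W a else {0})"
      using x y unfolding blocks_def by blast+
    then show "(\<lambda>i. (x + y) (a, i)) \<in> (if a \<in> A then W a else {0})"
      unfolding block_add using assms fs.subspace_add by (auto split: if_splits)
  qed
next
  fix c x assume x: "x \<in> blocks A W"
  show "fscale c x \<in> blocks A W" unfolding blocks_def
  proof (intro CollectI allI)
    fix a
    have "(\<lambda>i. x (a,i)) \<in> (if a \<in> A then W a else {0})"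
      using x unfolding blocks_def by blast
    moreover have "(\<lambda>i. fscale c x (a, i)) = fscale c (\<lambda>i. x (a,i))"
      by (simp add: fun_eq_iff fscale_def)
    ultimately show "(\<lambda>i. fscale c x (a, i)) \<in> (if a \<in> A then W a else {0})"
      using assms fs.subspace_scale by (auto simp: fscale_def zero_fun_def fun_eq_iff split: if_splits)
  qed
qed

lemma findim_blocks:
  assumes "finite A"
  shows "findim (blocks A (\<lambda>a. coord_space (n a)) :: ('a \<times> nat \<Rightarrow> 'k::field) set)"
proof (rule findim_subset[OF findim_vanishing])
  show "finite (SIGMA a:A. {..<n a})" using assms by auto
  show "blocks A (\<lambda>a. coord_space (n a)) \<subseteq> {x :: _ \<Rightarrow> 'k. \<forall>q. q \<notin> (SIGMA a:A. {..<n a}) \<longrightarrow> x q = 0}"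
  proof (intro subsetI CollectI allI impI)
    fix x :: "'a \<times> nat \<Rightarrow> 'k" and q
    assume x: "x \<in> blocks A (\<lambda>a. coord_space (n a))" and q: "q \<notin> (SIGMA a:A. {..<n a})"
    obtain a i where qa: "q = (a,i)" by (cases q)
    have "(\<lambda>i. x (a,i)) \<in> (if a \<in> A then coord_space (n a) else {0})"
      using x by (simp add: blocks_def)
    then show "x q = 0" using q qa by (auto simp: coord_space_def fun_eq_iff split: if_splits)
  qed
qed

lemma blocks_singleton: "blocks {a} W = embed a ` W a"
proof
  show "blocks {a} W \<subseteq> embed a ` W a"
  proof
    fix x assume x: "x \<in> blocks {a} W"
    have c: "(\<lambda>i. x (b,i)) \<in> (if b \<in> {a} then W b else {0})" for b
      using x unfolding blocks_def by blast
    have "x = embed a (\<lambda>i. x (a,i))"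
    proof
      fix q show "x q = embed a (\<lambda>i. x (a,i)) q"
      proof (cases q)
        case (Pair b i) then show ?thesis using c[of b] by (auto simp: embed_def fun_eq_iff)
      qed
    qed
    then show "x \<in> embed a ` W a" using c[of a] by auto
  qed
qed (auto simp: blocks_def embed_def fun_eq_iff)

lemma blocks_insert:
  assumes "a \<notin> A" "\<forall>b\<in>insert a A. fsubspace (W b)"
  shows "blocks (insert a A) W = sumspace (blocks {a} W) (blocks A W)"
proof
  show "blocks (insert a A) W \<subseteq> sumspace (blocks {a} W) (blocks A W)"
  proof
    fix x assume x: "x \<in> blocks (insert a A) W"
    have c: "(\<lambda>i. x (b,i)) \<in> (if b \<in> insert a A then W b else {0})" for b
      using x unfolding blocks_def by blast
    define x1 where "x1 = (\<lambda>(b,i). if b = a then x (b,i) else 0)"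
    define x2 where "x2 = (\<lambda>(b,i). if b = a then 0 else x (b,i))"
    have "x = x1 + x2" by (auto simp: x1_def x2_def fun_eq_iff)
    moreover have "x1 \<in> blocks {a} W"
      unfolding blocks_def using c[of a] by (auto simp: x1_def zero_fun_def)
    moreover have "x2 \<in> blocks A W"
      unfolding blocks_def
    proof (intro CollectI allI)
      fix b
      show "(\<lambda>i. x2 (b, i)) \<in> (if b \<in> A then W b else {0})"
        using c[of b] assms(1) by (cases "b = a") (auto simp: x2_def zero_fun_def)
    qed
    ultimately show "x \<in> sumspace (blocks {a} W) (blocks A W)" unfolding sumspace_def by blast
  qed
  show "sumspace (blocks {a} W) (blocks A W) \<subseteq> blocks (insert a A) W"
  proof
    fix z assume "z \<in> sumspace (blocks {a} W) (blocks A W)"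
    then obtain x y where z: "z = x + y" and x: "x \<in> blocks {a} W" and y: "y \<in> blocks A W"
      unfolding sumspace_def by blast
    have cx: "(\<lambda>i. x (b,i)) \<in> (if b \<in> {a} then W b else {0})" for b
      using x unfolding blocks_def by blast
    have cy: "(\<lambda>i. y (b,i)) \<in> (if b \<in> A then W b else {0})" for b
      using y unfolding blocks_def by blast
    show "z \<in> blocks (insert a A) W"
      unfolding blocks_def z
    proof (intro CollectI allI)
      fix b
      show "(\<lambda>i. (x + y) (b, i)) \<in> (if b \<in> insert a A then W b else {0})"
        unfolding block_add
        using cx[of b] cy[of b] assms fs.subspace_add[of "W b"] by (cases "b = a") (auto split: if_splits)
    qed
  qed
qed

lemma blocks_disjoint:
  assumes "a \<notin> A"
  shows "blocks {a} W \<inter> blocks A W \<subseteq> {0}"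
proof
  fix x assume "x \<in> blocks {a} W \<inter> blocks A W"
  then have in_a: "(\<lambda>i. x (b,i)) \<in> (if b \<in> {a} then W b else {0})"
    and in_A: "(\<lambda>i. x (b,i)) \<in> (if b \<in> A then W b else {0})" for b
    unfolding blocks_def by blast+
  have "(\<lambda>i. x (b,i)) = 0" for b
    using in_a[of b] in_A[of b] assms by (cases "b = a") simp_all
  then show "x \<in> {0}" by (auto simp: fun_eq_iff dest: fun_cong)
qed

text \<open>The block inclusion is injective and linear, hence preserves dimension.\<close>

lemma fdim_embed:
  fixes S :: "(nat \<Rightarrow> 'k::field) set"
  shows "fdim (embed a ` S) = fdim S"
proof -
  have hom: "module_hom fscale fscale (embed a :: (nat \<Rightarrow> 'k::field) \<Rightarrow> _)"
    by (rule module_hom.intro[OF fs.module_axioms fs.module_axioms])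
      (auto simp: module_hom_axioms_def embed_def fscale_def fun_eq_iff)
  have inj: "inj (embed a :: (nat \<Rightarrow> 'k) \<Rightarrow> _)"
    unfolding inj_def embed_def fun_eq_iff by auto
  obtain B where B: "B \<subseteq> S" "fs.independent B" "S \<subseteq> fs.span B" "card B = fdim S"
    by (rule fs.basis_exists)
  have "fs.independent (embed a ` B)"
    using module_hom.independent_injective_image[OF hom B(2)] inj by (simp add: inj_on_def inj_def)
  moreover have "embed a ` B \<subseteq> embed a ` S" using B(1) by (rule image_mono)
  moreover have "embed a ` S \<subseteq> fs.span (embed a ` B)"
    using module_hom.span_image[OF hom, of B] B(3) by blast
  ultimately have "card (embed a ` B) = fdim (embed a ` S)"
    using fs.basis_card_eq_dim by blast
  moreover have "card (embed a ` B) = card B" using inj by (simp add: card_image inj_on_def inj_def)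
  ultimately show ?thesis using B(4) by simp
qed

lemma fdim_blocks:
  assumes "finite A" "\<forall>a\<in>A. fsubspace (W a) \<and> W a \<subseteq> coord_space (n a)"
  shows "fdim (blocks A W :: ('a \<times> nat \<Rightarrow> 'k::field) set) = (\<Sum>a\<in>A. fdim (W a))"
  using assms
proof (induction A rule: finite_induct)
  case empty
  have "blocks {} W = {0}" unfolding blocks_def by (auto simp: fun_eq_iff)
  then show ?case by (simp add: fs.dim_zero)
next
  case (insert a A)
  let ?X = "blocks {a} W" and ?Y = "blocks A W"
  have sub: "fsubspace ?X" "fsubspace ?Y" using insert.prems by (auto intro!: blocks_subspace)
  have "?X \<subseteq> blocks {a} (\<lambda>a. coord_space (n a))" "?Y \<subseteq> blocks A (\<lambda>a. coord_space (n a))"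
    using insert.prems by (auto intro!: blocks_mono)
  then have fin: "findim ?X" "findim ?Y"
    using findim_blocks[of "{a}" n] findim_blocks[OF insert.hyps(1), of n] by blast+
  have "fdim (?X \<inter> ?Y) \<le> fdim ({0} :: ('a \<times> nat \<Rightarrow> 'k) set)"
    using fs.dim_le_of_subset[OF finite.emptyI _ blocks_disjoint[OF insert.hyps(2)]] by simp
  then have "fdim (?X \<inter> ?Y) = 0" by (simp add: fs.dim_zero)
  moreover have "fdim ?X = fdim (W a)" unfolding blocks_singleton by (rule fdim_embed)
  moreover have "blocks (insert a A) W = sumspace ?X ?Y"
    using blocks_insert[of a A W] insert by auto
  moreover obtain WX WY where "finite WX" "?X \<subseteq> fs.span WX" "finite WY" "?Y \<subseteq> fs.span WY"
    using fin by blast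
  then have "fdim (sumspace ?X ?Y) + fdim (?X \<inter> ?Y) = fdim ?X + fdim ?Y"
    unfolding sumspace_def using fs.dim_sum_inter[OF sub(1) _ _ sub(2)] by blast
  ultimately show ?case using insert by simp
qed


section \<open>Excess of families of local subspaces\<close>

definition restr_h :: "('v,'e) pre_digraph \<Rightarrow> ('v,'e,'k::field) sheaf \<Rightarrow> 'e \<Rightarrow> (nat \<Rightarrow> 'k) \<Rightarrow> (nat \<Rightarrow> 'k)" where
  "restr_h H F e y = (\<lambda>i. if i < vdim F (head H e) then (\<Sum>j<edim F e. rest_h F e i j * y j) else 0)"

definition restr_t :: "('v,'e) pre_digraph \<Rightarrow> ('v,'e,'k::field) sheaf \<Rightarrow> 'e \<Rightarrow> (nat \<Rightarrow> 'k) \<Rightarrow> (nat \<Rightarrow> 'k)" where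
  "restr_t H F e y = (\<lambda>i. if i < vdim F (tail H e) then (\<Sum>j<edim F e. rest_t F e i j * y j) else 0)"

definition family :: "('v,'e) pre_digraph \<Rightarrow> ('v,'e,'k::field) sheaf \<Rightarrow> ('v \<Rightarrow> (nat \<Rightarrow> 'k) set) \<Rightarrow> bool" where
  "family H F U \<longleftrightarrow> (\<forall>v\<in>verts H. fsubspace (U v) \<and> U v \<subseteq> stalkV F v)"

definition sections :: "('v,'e) pre_digraph \<Rightarrow> ('v,'e,'k::field) sheaf \<Rightarrow> ('v \<Rightarrow> (nat \<Rightarrow> 'k) set) \<Rightarrow> 'e \<Rightarrow> (nat \<Rightarrow> 'k) set" where
  "sections H F U e = {y \<in> coord_space (edim F e). restr_h H F e y \<in> U (head H e) \<and> restr_t H F e y \<in> U (tail H e)}"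

definition fexcess :: "('v,'e) pre_digraph \<Rightarrow> ('v,'e,'k::field) sheaf \<Rightarrow> ('v \<Rightarrow> (nat \<Rightarrow> 'k) set) \<Rightarrow> int" where
  "fexcess H F U = (\<Sum>e\<in>arcs H. int (fdim (sections H F U e))) - (\<Sum>v\<in>verts H. int (fdim (U v)))"

lemma restr_h_add: "restr_h H F e (y + z) = restr_h H F e y + restr_h H F e z"
  by (auto simp: restr_h_def fun_eq_iff sum.distrib algebra_simps)

lemma restr_h_scale: "restr_h H F e (fscale c y) = fscale c (restr_h H F e y)"
  by (auto simp: restr_h_def fun_eq_iff fscale_def sum_distrib_left algebra_simps)

lemma restr_t_add: "restr_t H F e (y + z) = restr_t H F e y + restr_t H F e z"
  by (auto simp: restr_t_def fun_eq_iff sum.distrib algebra_simps)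

lemma restr_t_scale: "restr_t H F e (fscale c y) = fscale c (restr_t H F e y)"
  by (auto simp: restr_t_def fun_eq_iff fscale_def sum_distrib_left algebra_simps)

lemma restr_h_stalk: "restr_h H F e y \<in> stalkV F (head H e)"
  by (auto simp: restr_h_def stalkV_def)

lemma restr_t_stalk: "restr_t H F e y \<in> stalkV F (tail H e)"
  by (auto simp: restr_t_def stalkV_def)

lemma sections_coord_space: "sections H F U e \<subseteq> coord_space (edim F e)"
  by (auto simp: sections_def)

lemma family_0: "family H F U \<Longrightarrow> v \<in> verts H \<Longrightarrow> 0 \<in> U v"
  unfolding family_def using fs.subspace_0 by blast

lemma family_findim:
  assumes "family H F U" "v \<in> verts H"
  shows "findim (U v)"
proof (rule findim_in_coord_space)
  show "U v \<subseteq> coord_space (vdim F v)" using assms by (simp add: family_def stalkV_coord_space)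
qed

lemma totE_blocks: "totE H F = blocks (arcs H) (\<lambda>e. coord_space (edim F e))"
  unfolding totE_def blocks_def coord_space_def by (auto simp: fun_eq_iff)

lemma totV_blocks: "totV H F = blocks (verts H) (\<lambda>v. coord_space (vdim F v))"
  unfolding totV_def blocks_def coord_space_def by (auto simp: fun_eq_iff)

lemma dsum_blocks: "family H F U \<Longrightarrow> dsum H F U = blocks (verts H) U"
  unfolding dsum_def totV_def blocks_def family_def stalkV_def by (auto simp: fun_eq_iff)

context fin_digraph
begin

lemma sections_subspace:
  fixes F :: "('a,'b,'k::field) sheaf"
  assumes "family G F U" "e \<in> arcs G"
  shows "fsubspace (sections G F U e)"
proof -
  have h: "fsubspace (U (head G e))" "fsubspace (U (tail G e))"
    using assms by (auto simp: family_def)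
  have c: "fsubspace (coord_space (edim F e) :: (nat \<Rightarrow> 'k) set)" by (rule coord_space_subspace)
  have z: "restr_h G F e 0 = 0" "restr_t G F e 0 = 0" by (auto simp: restr_h_def restr_t_def fun_eq_iff)
  show ?thesis
    unfolding fs.subspace_def sections_def
  proof (intro conjI ballI allI)
    show "0 \<in> {y \<in> coord_space (edim F e). restr_h G F e y \<in> U (head G e) \<and> restr_t G F e y \<in> U (tail G e)}"
      using z fs.subspace_0[OF h(1)] fs.subspace_0[OF h(2)] fs.subspace_0[OF c] by simp
    fix x y
    assume "x \<in> {y \<in> coord_space (edim F e). restr_h G F e y \<in> U (head G e) \<and> restr_t G F e y \<in> U (tail G e)}"
      and "y \<in> {y \<in> coord_space (edim F e). restr_h G F e y \<in> U (head G e) \<and> restr_t G F e y \<in> U (tail G e)}"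
    then show "x + y \<in> {y \<in> coord_space (edim F e). restr_h G F e y \<in> U (head G e) \<and> restr_t G F e y \<in> U (tail G e)}"
      using fs.subspace_add[OF h(1)] fs.subspace_add[OF h(2)] fs.subspace_add[OF c]
      by (simp add: restr_h_add restr_t_add)
  next
    fix c' x
    assume "x \<in> {y \<in> coord_space (edim F e). restr_h G F e y \<in> U (head G e) \<and> restr_t G F e y \<in> U (tail G e)}"
    then show "fscale c' x \<in> {y \<in> coord_space (edim F e). restr_h G F e y \<in> U (head G e) \<and> restr_t G F e y \<in> U (tail G e)}"
      using fs.subspace_scale[OF h(1)] fs.subspace_scale[OF h(2)] fs.subspace_scale[OF c]
      by (simp add: restr_h_scale restr_t_scale)
  qed
qed

lemma d_h_ecomp:
  assumes "e \<in> arcs G"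
  shows "d_h G F (ecomp e w) = embed (head G e) (restr_h G F e (\<lambda>j. w (e,j)))"
proof
  fix q show "d_h G F (ecomp e w) q = embed (head G e) (restr_h G F e (\<lambda>j. w (e,j))) q"
  proof (cases q)
    case (Pair v i)
    have inner: "(\<Sum>j<edim F e'. rest_h F e' i j * ecomp e w (e',j))
        = (if e' = e then (\<Sum>j<edim F e. rest_h F e i j * w (e,j)) else 0)" for e'
      by (auto simp: ecomp_def)
    have "(\<Sum>e'\<in>{e' \<in> arcs G. head G e' = v}. \<Sum>j<edim F e'. rest_h F e' i j * ecomp e w (e',j))
        = (if head G e = v then (\<Sum>j<edim F e. rest_h F e i j * w (e,j)) else 0)"
      unfolding inner using assms by (simp add: sum.delta)
    then show ?thesis using Pair assms by (auto simp: d_h_def embed_def restr_h_def)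
  qed
qed

lemma d_t_ecomp:
  assumes "e \<in> arcs G"
  shows "d_t G F (ecomp e w) = embed (tail G e) (restr_t G F e (\<lambda>j. w (e,j)))"
proof
  fix q show "d_t G F (ecomp e w) q = embed (tail G e) (restr_t G F e (\<lambda>j. w (e,j))) q"
  proof (cases q)
    case (Pair v i)
    have inner: "(\<Sum>j<edim F e'. rest_t F e' i j * ecomp e w (e',j))
        = (if e' = e then (\<Sum>j<edim F e. rest_t F e i j * w (e,j)) else 0)" for e'
      by (auto simp: ecomp_def)
    have "(\<Sum>e'\<in>{e' \<in> arcs G. tail G e' = v}. \<Sum>j<edim F e'. rest_t F e' i j * ecomp e w (e',j))
        = (if tail G e = v then (\<Sum>j<edim F e. rest_t F e i j * w (e,j)) else 0)"
      unfolding inner using assms by (simp add: sum.delta)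
    then show ?thesis using Pair assms by (auto simp: d_t_def embed_def restr_t_def)
  qed
qed

lemma embed_in_dsum:
  assumes "v \<in> verts G" "y \<in> stalkV F v" "\<forall>u\<in>verts G. 0 \<in> U u"
  shows "embed v y \<in> dsum G F U \<longleftrightarrow> y \<in> U v"
proof -
  have comp: "(\<lambda>i. embed v y (u,i)) = (if u = v then y else 0)" for u
    by (auto simp: embed_def fun_eq_iff)
  have "embed v y \<in> totV G F" using assms(1,2) by (auto simp: totV_def embed_def stalkV_def)
  then show ?thesis unfolding dsum_def using assms by (auto simp: comp)
qed

lemma Gamma_dsum:
  assumes "family G F U"
  shows "Gamma_ht G F (dsum G F U) = blocks (arcs G) (sections G F U)"
proof -
  have zero: "\<forall>u\<in>verts G. 0 \<in> U u" using family_0[OF assms] by blast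
  have hd: "d_h G F (ecomp e w) \<in> dsum G F U \<longleftrightarrow> restr_h G F e (\<lambda>j. w (e,j)) \<in> U (head G e)"
    if "e \<in> arcs G" for e w
    unfolding d_h_ecomp[OF that] using that restr_h_stalk zero by (intro embed_in_dsum) auto
  have tl: "d_t G F (ecomp e w) \<in> dsum G F U \<longleftrightarrow> restr_t G F e (\<lambda>j. w (e,j)) \<in> U (tail G e)"
    if "e \<in> arcs G" for e w
    unfolding d_t_ecomp[OF that] using that restr_t_stalk zero by (intro embed_in_dsum) auto
  show ?thesis
    unfolding Gamma_ht_def totE_blocks
    using hd tl by (auto simp: blocks_def sections_def split: if_splits)
qed

lemma excess_dsum:
  assumes "family G F U"
  shows "excess G F (dsum G F U) = fexcess G F U"
proof -
  have "fdim (Gamma_ht G F (dsum G F U)) = (\<Sum>e\<in>arcs G. fdim (sections G F U e))"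
    unfolding Gamma_dsum[OF assms]
    by (rule fdim_blocks[where n="\<lambda>e. edim F e"])
      (use sections_subspace[OF assms] sections_coord_space[of G F U] in auto)
  moreover have "fdim (dsum G F U) = (\<Sum>v\<in>verts G. fdim (U v))"
    unfolding dsum_blocks[OF assms]
    by (rule fdim_blocks) (use assms in \<open>auto simp: family_def stalkV_coord_space\<close>)
  ultimately show ?thesis by (simp add: excess_def fexcess_def)
qed

lemma admissible_dsum:
  assumes "family G F U"
  shows "admissible G F (dsum G F U)"
  unfolding admissible_def dsum_blocks[OF assms]
proof
  show "fsubspace (blocks (verts G) U)"
    using assms by (intro blocks_subspace) (auto simp: family_def)
  show "blocks (verts G) U \<subseteq> totV G F"
    unfolding totV_blocks by (rule blocks_mono) (use assms in \<open>auto simp: family_def stalkV_coord_space\<close>)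
qed

lemma findim_totV: "findim (totV G F)"
  unfolding totV_blocks by (rule findim_blocks) simp

lemma findim_totE: "findim (totE G F)"
  unfolding totE_blocks by (rule findim_blocks) simp

lemma sum_embed_eq:
  assumes "x \<in> totV G F"
  shows "x = (\<Sum>v\<in>verts G. embed v (\<lambda>i. x (v,i)))"
proof
  fix q show "x q = (\<Sum>v\<in>verts G. embed v (\<lambda>i. x (v,i))) q"
  proof (cases q)
    case (Pair b i)
    have "(\<Sum>v\<in>verts G. embed v (\<lambda>i. x (v,i))) (b,i) = (if b \<in> verts G then x (b,i) else 0)"
      by (simp add: sum_fun_apply embed_def sum.delta')
    also have "\<dots> = x (b,i)" using assms by (auto simp: totV_def)
    finally show ?thesis using Pair by simp
  qed
qed

text \<open>Only the coordinate part of a subspace matters: for U_v = {y \<in> F(v). embed v y \<in> U},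
  Gamma_ht(U) = Gamma_ht(\<Oplus>_v U_v) (the images of d_h, d_t on a summand F(e) lie in a single
  stalk) while \<Oplus>_v U_v \<subseteq> U.\<close>

lemma excess_le_family:
  fixes F :: "('a,'b,'k::field) sheaf"
  assumes "admissible G F U"
  shows "\<exists>U0. family G F U0 \<and> excess G F U \<le> fexcess G F U0"
proof -
  define U0 where "U0 v = stalkV F v \<inter> {y. embed v y \<in> U}" for v
  have sU: "fsubspace U" and UT: "U \<subseteq> totV G F" using assms admissible_def by auto
  have hom: "module_hom fscale fscale (embed v :: (nat \<Rightarrow> 'k) \<Rightarrow> _)" for v
    by (rule module_hom.intro[OF fs.module_axioms fs.module_axioms])
      (auto simp: module_hom_axioms_def embed_def fscale_def fun_eq_iff)
  have fam: "family G F U0"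
    unfolding family_def
  proof (intro ballI conjI)
    fix v show "U0 v \<subseteq> stalkV F v" by (auto simp: U0_def)
    show "fsubspace (U0 v)" unfolding U0_def
      by (intro fs.subspace_inter)
        (auto simp: stalkV_coord_space coord_space_subspace intro: module_hom.subspace_linear_preimage[OF hom sU])
  qed
  have zero: "\<forall>u\<in>verts G. 0 \<in> U0 u" using family_0[OF fam] by blast
  have "Gamma_ht G F U = Gamma_ht G F (dsum G F U0)"
  proof -
    have hd: "d_h G F (ecomp e w) \<in> dsum G F U0 \<longleftrightarrow> d_h G F (ecomp e w) \<in> U"
      if "e \<in> arcs G" for e w
      unfolding d_h_ecomp[OF that]
      by (subst embed_in_dsum) (use that restr_h_stalk zero in \<open>auto simp: U0_def\<close>)
    have tl: "d_t G F (ecomp e w) \<in> dsum G F U0 \<longleftrightarrow> d_t G F (ecomp e w) \<in> U"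
      if "e \<in> arcs G" for e w
      unfolding d_t_ecomp[OF that]
      by (subst embed_in_dsum) (use that restr_t_stalk zero in \<open>auto simp: U0_def\<close>)
    show ?thesis unfolding Gamma_ht_def using hd tl by auto
  qed
  moreover have "dsum G F U0 \<subseteq> U"
  proof
    fix x assume x: "x \<in> dsum G F U0"
    have "(\<Sum>v\<in>verts G. embed v (\<lambda>i. x (v,i))) \<in> U"
      by (rule fs.subspace_sum[OF sU]) (use x in \<open>auto simp: dsum_def U0_def\<close>)
    moreover have "x \<in> totV G F" using x by (simp add: dsum_def)
    ultimately show "x \<in> U" using sum_embed_eq[of x F] by simp
  qed
  then have "fdim (dsum G F U0) \<le> fdim U"
    by (rule fdim_mono[OF findim_subset[OF findim_totV UT]])
  ultimately have "excess G F U \<le> excess G F (dsum G F U0)"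
    unfolding excess_def by simp
  then show ?thesis using excess_dsum[OF fam] fam by auto
qed

lemma excess_bounds:
  assumes "admissible G F U"
  shows "excess G F U \<in> {- int (fdim (totV G F)) .. int (fdim (totE G F))}"
proof -
  have "fdim U \<le> fdim (totV G F)"
    by (rule fdim_mono[OF findim_totV]) (use assms in \<open>simp add: admissible_def\<close>)
  moreover have "fdim (Gamma_ht G F U) \<le> fdim (totE G F)"
    by (rule fdim_mono[OF findim_totE]) (auto simp: Gamma_ht_def)
  ultimately show ?thesis by (auto simp: excess_def)
qed

lemma excess_values_finite: "finite {excess G F U | U. admissible G F U}"
  by (rule finite_subset[OF _ finite_atLeastAtMost_int[of "- int (fdim (totV G F))" "int (fdim (totE G F))"]])
    (use excess_bounds in blast)

lemma excess_values_nonempty: "{excess G F U | U. admissible G F U} \<noteq> {}"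
proof -
  have "admissible G F {0}" unfolding admissible_def by (auto simp: totV_def)
  then show ?thesis by blast
qed

lemma fexcess_le_max_excess:
  assumes "family G F U"
  shows "fexcess G F U \<le> max_excess G F"
proof -
  have "fexcess G F U \<in> {excess G F U | U. admissible G F U}"
    using excess_dsum[OF assms] admissible_dsum[OF assms] by force
  then show ?thesis unfolding max_excess_def by (rule Max_ge[OF excess_values_finite])
qed

lemma max_excess_attained:
  "\<exists>U. family G F U \<and> fexcess G F U = max_excess G F"
proof -
  have "max_excess G F \<in> {excess G F U | U. admissible G F U}"
    unfolding max_excess_def using excess_values_finite excess_values_nonempty by (rule Max_in)
  then obtain U1 where U1: "admissible G F U1" "excess G F U1 = max_excess G F" by auto
  obtain U0 where "family G F U0" "excess G F U1 \<le> fexcess G F U0"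
    using excess_le_family[OF U1(1)] by blast
  then show ?thesis using fexcess_le_max_excess[of F U0] U1 by (intro exI[of _ U0]) auto
qed

end


section \<open>Pullbacks, automorphisms and supermodularity\<close>

lemma pullback_simps [simp]:
  "vdim (pullback pv pe F) v = vdim F (pv v)"
  "edim (pullback pv pe F) e = edim F (pe e)"
  "rest_h (pullback pv pe F) e = rest_h F (pe e)"
  "rest_t (pullback pv pe F) e = rest_t F (pe e)"
  by (simp_all add: pullback_def)

lemma sum_constant_fibres:
  fixes h :: "'b \<Rightarrow> int"
  assumes "finite S" "finite T" "\<psi> ` S \<subseteq> T" "\<forall>t\<in>T. card {s\<in>S. \<psi> s = t} = c"
  shows "(\<Sum>s\<in>S. h (\<psi> s)) = int c * (\<Sum>t\<in>T. h t)"
proof -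
  have "(\<Sum>s\<in>S. h (\<psi> s)) = (\<Sum>t\<in>T. \<Sum>s\<in>{s\<in>S. \<psi> s = t}. h (\<psi> s))"
    using sum.group[OF assms(1,2,3), of "\<lambda>s. h (\<psi> s)"] by simp
  also have "\<dots> = (\<Sum>t\<in>T. int c * h t)"
  proof (rule sum.cong[OF refl])
    fix t assume t: "t \<in> T"
    have "(\<Sum>s\<in>{s\<in>S. \<psi> s = t}. h (\<psi> s)) = (\<Sum>s\<in>{s\<in>S. \<psi> s = t}. h t)" by (rule sum.cong) auto
    also have "\<dots> = int c * h t" using assms(4) t by simp
    finally show "(\<Sum>s\<in>{s\<in>S. \<psi> s = t}. h (\<psi> s)) = int c * h t" .
  qed
  also have "\<dots> = int c * (\<Sum>t\<in>T. h t)" by (simp add: sum_distrib_left)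
  finally show ?thesis .
qed

text \<open>Pulling a family back along a graph morphism (pv, pe): the section space over an edge
  e' of H' is the section space over its image, so if all fibres have c elements the excess
  is multiplied by c.\<close>

lemma family_pullback:
  assumes "\<forall>v\<in>verts H'. pv v \<in> verts H" "family H F U"
  shows "family H' (pullback pv pe F) (\<lambda>v. U (pv v))"
  using assms by (auto simp: family_def stalkV_def)

lemma sections_pullback:
  assumes "tail H (pe e) = pv (tail H' e)" "head H (pe e) = pv (head H' e)"
  shows "sections H' (pullback pv pe F) (\<lambda>v. U (pv v)) e = sections H F U (pe e)"
proof -
  have "restr_h H' (pullback pv pe F) e = restr_h H F (pe e)"
    "restr_t H' (pullback pv pe F) e = restr_t H F (pe e)"
    using assms by (auto simp: restr_h_def restr_t_def fun_eq_iff)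
  then show ?thesis using assms by (auto simp: sections_def)
qed

lemma fexcess_pullback:
  assumes "fin_digraph H" "fin_digraph H'" "\<forall>v\<in>verts H'. pv v \<in> verts H"
    "\<forall>e\<in>arcs H'. pe e \<in> arcs H \<and> tail H (pe e) = pv (tail H' e) \<and> head H (pe e) = pv (head H' e)"
    "\<forall>v\<in>verts H. card {v'\<in>verts H'. pv v' = v} = c" "\<forall>e\<in>arcs H. card {e'\<in>arcs H'. pe e' = e} = c"
  shows "fexcess H' (pullback pv pe F) (\<lambda>v. U (pv v)) = int c * fexcess H F U"
proof -
  note fin = fin_digraph.finite_verts[OF assms(1)] fin_digraph.finite_arcs[OF assms(1)]
    fin_digraph.finite_verts[OF assms(2)] fin_digraph.finite_arcs[OF assms(2)]
  have "sections H' (pullback pv pe F) (\<lambda>v. U (pv v)) e = sections H F U (pe e)"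
    if "e \<in> arcs H'" for e
    using assms(4) that by (intro sections_pullback) auto
  then have "(\<Sum>e\<in>arcs H'. int (fdim (sections H' (pullback pv pe F) (\<lambda>v. U (pv v)) e)))
      = (\<Sum>e\<in>arcs H'. int (fdim (sections H F U (pe e))))"
    by simp
  also have "\<dots> = int c * (\<Sum>e\<in>arcs H. int (fdim (sections H F U e)))"
    by (rule sum_constant_fibres[OF fin(4) fin(2)]) (use assms(4,6) in auto)
  finally have "(\<Sum>e\<in>arcs H'. int (fdim (sections H' (pullback pv pe F) (\<lambda>v. U (pv v)) e)))
      = int c * (\<Sum>e\<in>arcs H. int (fdim (sections H F U e)))" .
  moreover have "(\<Sum>v\<in>verts H'. int (fdim (U (pv v)))) = int c * (\<Sum>v\<in>verts H. int (fdim (U v)))"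
    by (rule sum_constant_fibres[OF fin(3) fin(1)]) (use assms(3,5) in auto)
  ultimately show ?thesis unfolding fexcess_def by (simp add: right_diff_distrib)
qed

context fin_digraph
begin

lemma fexcess_cong:
  assumes "\<forall>v\<in>verts G. U v = U' v"
  shows "fexcess G F U = fexcess G F U'"
proof -
  have "sections G F U e = sections G F U' e" if "e \<in> arcs G" for e
    using assms that by (simp add: sections_def)
  then show ?thesis unfolding fexcess_def using assms by simp
qed

lemma fexcess_automorphism:
  assumes "bij_betw av (verts G) (verts G)" "bij_betw ae (arcs G) (arcs G)"
    "\<forall>e\<in>arcs G. tail G (ae e) = av (tail G e) \<and> head G (ae e) = av (head G e)"
    "\<forall>v\<in>verts G. vdim F (av v) = vdim F v"
    "\<forall>e\<in>arcs G. edim F (ae e) = edim F e \<and> rest_h F (ae e) = rest_h F e \<and> rest_t F (ae e) = rest_t F e"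
    "family G F U"
  shows "family G F (\<lambda>v. U (av v))" "fexcess G F (\<lambda>v. U (av v)) = fexcess G F U"
proof -
  show "family G F (\<lambda>v. U (av v))"
    unfolding family_def
  proof
    fix v assume v: "v \<in> verts G"
    have "av v \<in> verts G" by (rule bij_betw_apply[OF assms(1) v])
    then have "fsubspace (U (av v))" "U (av v) \<subseteq> stalkV F (av v)"
      using assms(6) by (auto simp: family_def)
    moreover have "stalkV F (av v) = stalkV F v" using assms(4) v by (simp add: stalkV_def)
    ultimately show "fsubspace (U (av v)) \<and> U (av v) \<subseteq> stalkV F v" by simp
  qed
  have sec: "sections G F (\<lambda>v. U (av v)) e = sections G F U (ae e)" if e: "e \<in> arcs G" for e
  proof -
    have h: "head G (ae e) = av (head G e)" "tail G (ae e) = av (tail G e)" using assms(3) e by auto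
    have vd: "vdim F (av (head G e)) = vdim F (head G e)" "vdim F (av (tail G e)) = vdim F (tail G e)"
      using assms(4) e by auto
    have ed: "edim F (ae e) = edim F e" "rest_h F (ae e) = rest_h F e" "rest_t F (ae e) = rest_t F e"
      using assms(5) e by auto
    have "restr_h G F (ae e) = restr_h G F e" "restr_t G F (ae e) = restr_t G F e"
      unfolding restr_h_def restr_t_def h vd ed by simp_all
    then show ?thesis unfolding sections_def h ed by simp
  qed
  have "(\<Sum>e\<in>arcs G. int (fdim (sections G F (\<lambda>v. U (av v)) e)))
      = (\<Sum>e\<in>arcs G. int (fdim (sections G F U (ae e))))"
    using sec by simp
  also have "\<dots> = (\<Sum>e\<in>arcs G. int (fdim (sections G F U e)))"
    by (rule sum.reindex_bij_betw[OF assms(2)])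
  finally show "fexcess G F (\<lambda>v. U (av v)) = fexcess G F U"
    unfolding fexcess_def using sum.reindex_bij_betw[OF assms(1), of "\<lambda>v. int (fdim (U v))"] by simp
qed

lemma family_sum:
  assumes "family G F U" "family G F W"
  shows "family G F (\<lambda>v. sumspace (U v) (W v))"
  unfolding family_def
proof (intro ballI conjI)
  fix v assume v: "v \<in> verts G"
  have U: "fsubspace (U v)" "U v \<subseteq> coord_space (vdim F v)"
    using assms(1) v by (auto simp: family_def stalkV_coord_space)
  have W: "fsubspace (W v)" "W v \<subseteq> coord_space (vdim F v)"
    using assms(2) v by (auto simp: family_def stalkV_coord_space)
  show "fsubspace (sumspace (U v) (W v))" unfolding sumspace_def
    by (rule fs.subspace_sums[OF U(1) W(1)])
  show "sumspace (U v) (W v) \<subseteq> stalkV F v"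
    unfolding sumspace_def stalkV_coord_space using U(2) W(2) coord_space_add by blast
qed

lemma family_inter:
  assumes "family G F U" "family G F W"
  shows "family G F (\<lambda>v. U v \<inter> W v)"
  using assms by (auto simp: family_def intro: fs.subspace_inter)

text \<open>At the vertices this is
  Grassmann's formula; over an edge, the sections for U \<inter> W are the intersection of those
  for U and W, while the sections for U + W contain the sum of those for U and W.\<close>

lemma fexcess_supermodular:
  assumes "family G F U" "family G F W"
  shows "fexcess G F U + fexcess G F W
    \<le> fexcess G F (\<lambda>v. sumspace (U v) (W v)) + fexcess G F (\<lambda>v. U v \<inter> W v)"
proof -
  let ?S = "\<lambda>v. sumspace (U v) (W v)" and ?I = "\<lambda>v. U v \<inter> W v"
  have arcs: "int (fdim (sections G F U e)) + int (fdim (sections G F W e))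
      \<le> int (fdim (sections G F ?S e)) + int (fdim (sections G F ?I e))" if e: "e \<in> arcs G" for e
  proof -
    have sU: "fsubspace (sections G F U e)" and sW: "fsubspace (sections G F W e)"
      using sections_subspace assms e by auto
    have fin: "findim (sections G F X e)" for X
      by (rule findim_in_coord_space[OF sections_coord_space])
    obtain BU BW where B: "finite BU" "sections G F U e \<subseteq> fs.span BU"
      "finite BW" "sections G F W e \<subseteq> fs.span BW"
      using fin[of U] fin[of W] by blast
    have I: "sections G F ?I e = sections G F U e \<inter> sections G F W e"
      by (auto simp: sections_def)
    have sub: "sumspace (sections G F U e) (sections G F W e) \<subseteq> sections G F ?S e"
    proof
      fix z assume "z \<in> sumspace (sections G F U e) (sections G F W e)"
      then obtain x y where z: "z = x + y" and x: "x \<in> sections G F U e" and y: "y \<in> sections G F W e"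
        unfolding sumspace_def by blast
      have "restr_h G F e z \<in> ?S (head G e)"
        using x y unfolding z restr_h_add sumspace_def sections_def by blast
      moreover have "restr_t G F e z \<in> ?S (tail G e)"
        using x y unfolding z restr_t_add sumspace_def sections_def by blast
      moreover have "z \<in> coord_space (edim F e)"
        using x y unfolding z sections_def by (auto intro: coord_space_add)
      ultimately show "z \<in> sections G F ?S e" unfolding sections_def by simp
    qed
    have "fdim (sumspace (sections G F U e) (sections G F W e)) \<le> fdim (sections G F ?S e)"
      by (rule fdim_mono[OF fin sub])
    moreover have "fdim (sumspace (sections G F U e) (sections G F W e))
        + fdim (sections G F U e \<inter> sections G F W e)
        = fdim (sections G F U e) + fdim (sections G F W e)"
      unfolding sumspace_def by (rule fs.dim_sum_inter[OF sU B(1,2) sW B(3,4)])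
    ultimately show ?thesis unfolding I by linarith
  qed
  have verts: "int (fdim (U v)) + int (fdim (W v)) = int (fdim (?S v)) + int (fdim (?I v))"
    if v: "v \<in> verts G" for v
  proof -
    have sU: "fsubspace (U v)" and sW: "fsubspace (W v)" using assms v by (auto simp: family_def)
    obtain BU BW where B: "finite BU" "U v \<subseteq> fs.span BU" "finite BW" "W v \<subseteq> fs.span BW"
      using family_findim[OF assms(1) v] family_findim[OF assms(2) v] by blast
    show ?thesis
      using fs.dim_sum_inter[OF sU B(1,2) sW B(3,4)] unfolding sumspace_def by linarith
  qed
  have "(\<Sum>e\<in>arcs G. int (fdim (sections G F U e))) + (\<Sum>e\<in>arcs G. int (fdim (sections G F W e)))
      \<le> (\<Sum>e\<in>arcs G. int (fdim (sections G F ?S e))) + (\<Sum>e\<in>arcs G. int (fdim (sections G F ?I e)))"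
    unfolding sum.distrib[symmetric] by (rule sum_mono) (rule arcs)
  moreover have "(\<Sum>v\<in>verts G. int (fdim (U v))) + (\<Sum>v\<in>verts G. int (fdim (W v)))
      = (\<Sum>v\<in>verts G. int (fdim (?S v))) + (\<Sum>v\<in>verts G. int (fdim (?I v)))"
    unfolding sum.distrib[symmetric] by (rule sum.cong[OF refl]) (rule verts)
  ultimately show ?thesis unfolding fexcess_def by linarith
qed

end


definition total_dim :: "('v,'e) pre_digraph \<Rightarrow> ('v \<Rightarrow> ('a \<Rightarrow> 'k::field) set) \<Rightarrow> nat" where
  "total_dim H U = (\<Sum>v\<in>verts H. fdim (U v))"

context fin_digraph
begin

text \<open>Among the families of maximal excess there is one of maximal total dimension, since
  total dimensions are bounded by dim F(V).\<close>

lemma maximiser_of_max_total_dim: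
  "\<exists>U. family G F U \<and> fexcess G F U = max_excess G F \<and>
     (\<forall>W. family G F W \<and> fexcess G F W = max_excess G F \<longrightarrow> total_dim G W \<le> total_dim G U)"
proof -
  obtain U0 where U0: "family G F U0" "fexcess G F U0 = max_excess G F"
    using max_excess_attained by blast
  define b where "b = (\<Sum>v\<in>verts G. fdim (stalkV F v))"
  have "total_dim G U < b + 1" if "family G F U" for U
  proof -
    have "total_dim G U \<le> b"
      unfolding total_dim_def b_def
    proof (rule sum_mono)
      fix v assume v: "v \<in> verts G"
      have "U v \<subseteq> stalkV F v" using that v by (simp add: family_def)
      then show "fdim (U v) \<le> fdim (stalkV F v)"
        by (rule fdim_mono[OF findim_in_coord_space[of _ "vdim F v"], rotated])
          (simp add: stalkV_coord_space)
    qed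
    then show ?thesis by simp
  qed
  then have "\<forall>W. family G F W \<and> fexcess G F W = max_excess G F \<longrightarrow> total_dim G W < b + 1"
    by blast
  from ex_has_greatest_nat[of "\<lambda>U. family G F U \<and> fexcess G F U = max_excess G F", OF _ this] U0
  show ?thesis by blast
qed

text \<open>A maximiser U of maximal total dimension contains every other maximiser W: by
  supermodularity U + W is again a maximiser (U \<inter> W cannot exceed the maximum); it contains
  U and has no larger total dimension, hence equals U.\<close>

lemma maximiser_absorbs:
  assumes U: "family G F U" "fexcess G F U = max_excess G F"
    and Umax: "\<forall>W. family G F W \<and> fexcess G F W = max_excess G F \<longrightarrow> total_dim G W \<le> total_dim G U"
    and W: "family G F W" "fexcess G F W = max_excess G F"
    and v: "v \<in> verts G"
  shows "W v \<subseteq> U v"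
proof -
  define S where "S = (\<lambda>v. sumspace (U v) (W v))"
  have famS: "family G F S" unfolding S_def by (rule family_sum[OF U(1) W(1)])
  have "fexcess G F S \<le> max_excess G F" by (rule fexcess_le_max_excess[OF famS])
  moreover have "fexcess G F (\<lambda>v. U v \<inter> W v) \<le> max_excess G F"
    by (rule fexcess_le_max_excess[OF family_inter[OF U(1) W(1)]])
  ultimately have "fexcess G F S = max_excess G F"
    using fexcess_supermodular[OF U(1) W(1)] U(2) W(2) unfolding S_def by linarith
  then have SU: "total_dim G S \<le> total_dim G U" using Umax famS by blast
  have sub: "U x \<subseteq> S x" "W x \<subseteq> S x" if x: "x \<in> verts G" for x
  proof -
    have "0 \<in> U x" "0 \<in> W x" using family_0[OF U(1) x] family_0[OF W(1) x] .
    show "U x \<subseteq> S x"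
    proof
      fix a assume "a \<in> U x"
      then have "a + 0 \<in> S x" unfolding S_def sumspace_def using \<open>0 \<in> W x\<close> by blast
      then show "a \<in> S x" by simp
    qed
    show "W x \<subseteq> S x"
    proof
      fix a assume "a \<in> W x"
      then have "0 + a \<in> S x" unfolding S_def sumspace_def using \<open>0 \<in> U x\<close> by blast
      then show "a \<in> S x" by simp
    qed
  qed
  have fin: "findim (S x)" if "x \<in> verts G" for x by (rule family_findim[OF famS that])
  have le: "fdim (U x) \<le> fdim (S x)" if "x \<in> verts G" for x
    by (rule fdim_mono[OF fin[OF that] sub(1)[OF that]])
  then have "total_dim G U \<le> total_dim G S" unfolding total_dim_def by (rule sum_mono)
  with SU have "(\<Sum>x\<in>verts G. fdim (U x)) = (\<Sum>x\<in>verts G. fdim (S x))"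
    unfolding total_dim_def by simp
  then have eq: "fdim (U v) = fdim (S v)" by (rule sum_mono_inv[OF _ le v finite_verts])
  obtain B where B: "finite B" "S v \<subseteq> fs.span B" using fin[OF v] by blast
  have "fsubspace (U v)" using U(1) v by (simp add: family_def)
  then have "S v \<subseteq> U v" by (rule fs.subspace_eq_of_dim_le[OF _ B sub(1)[OF v]]) (simp add: eq)
  then show ?thesis using sub(2)[OF v] by blast
qed

end


lemma sum_nth_distinct:
  assumes "distinct xs" "length xs = d"
  shows "(\<Sum>i<d. f (xs ! i)) = (\<Sum>y\<in>set xs. f y)"
  using sum.reindex_bij_betw[OF bij_betw_nth[OF assms(1) refl refl], of f] assms(2) by simp

lemma sum_over_orderings:
  fixes g :: "'b \<Rightarrow> int"
  assumes "finite A" "\<forall>a\<in>A. finite (P a) \<and> card (P a) = d"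
  shows "(\<Sum>x\<in>Sigma A (\<lambda>a. permutations_of_set (P a)). \<Sum>i<d. g (snd x ! i))
    = int (fact d) * (\<Sum>a\<in>A. \<Sum>b\<in>P a. g b)"
proof -
  have "(\<Sum>x\<in>Sigma A (\<lambda>a. permutations_of_set (P a)). \<Sum>i<d. g (snd x ! i))
      = (\<Sum>a\<in>A. \<Sum>\<sigma>\<in>permutations_of_set (P a). \<Sum>i<d. g (\<sigma> ! i))"
    using sum.Sigma[OF assms(1), of "\<lambda>a. permutations_of_set (P a)" "\<lambda>a \<sigma>. \<Sum>i<d. g (\<sigma> ! i)"] assms
    by (simp add: split_def)
  also have "\<dots> = (\<Sum>a\<in>A. \<Sum>\<sigma>\<in>permutations_of_set (P a). \<Sum>b\<in>P a. g b)"
  proof (intro sum.cong refl)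
    fix a \<sigma> assume a: "a \<in> A" and \<sigma>: "\<sigma> \<in> permutations_of_set (P a)"
    have "length \<sigma> = d" using \<sigma> a assms(2) length_finite_permutations_of_set by force
    then show "(\<Sum>i<d. g (\<sigma> ! i)) = (\<Sum>b\<in>P a. g b)"
      using sum_nth_distinct[of \<sigma> d g] \<sigma> by (simp add: permutations_of_set_def)
  qed
  also have "\<dots> = (\<Sum>a\<in>A. int (fact d) * (\<Sum>b\<in>P a. g b))"
    using assms(2) by (intro sum.cong refl) (simp add: card_permutations_of_set)
  finally show ?thesis by (simp add: sum_distrib_left)
qed

definition permv :: "(nat \<Rightarrow> nat) \<Rightarrow> 'a \<times> 'b list \<Rightarrow> 'a \<times> 'b list" where
  "permv p x = (fst x, permute_list p (snd x))"

lemma permute_list_ordering: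
  assumes "p permutes {..<length \<sigma>}" "\<sigma> \<in> permutations_of_set A"
  shows "permute_list p \<sigma> \<in> permutations_of_set A"
proof -
  have "mset (permute_list p \<sigma>) = mset \<sigma>" using assms(1) by simp
  then have s: "set (permute_list p \<sigma>) = set \<sigma>" by (rule mset_eq_setD)
  have "card (set (permute_list p \<sigma>)) = length (permute_list p \<sigma>)"
    using s assms(2) distinct_card[of \<sigma>] by (simp add: permutations_of_set_def)
  then have "distinct (permute_list p \<sigma>)" by (rule card_distinct)
  then show ?thesis using s assms(2) by (simp add: permutations_of_set_def)
qed

lemma permv_bij:
  assumes "p permutes {..<d}" "\<forall>a\<in>A. card (P a) = d"
  shows "bij_betw (permv p) (Sigma A (\<lambda>a. permutations_of_set (P a))) (Sigma A (\<lambda>a. permutations_of_set (P a)))"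
proof (rule bij_betw_byWitness[where f'="permv (inv p)"])
  let ?S = "Sigma A (\<lambda>a. permutations_of_set (P a))"
  have len: "length (snd x) = d" if "x \<in> ?S" for x
    using that assms(2) length_finite_permutations_of_set by force
  have ip: "inv p permutes {..<d}" using permutes_inv[OF assms(1)] .
  show "\<forall>a\<in>?S. permv (inv p) (permv p a) = a"
  proof
    fix x assume x: "x \<in> ?S"
    have "permute_list (inv p) (permute_list p (snd x)) = permute_list (p \<circ> inv p) (snd x)"
      using permute_list_compose[of "inv p" "snd x" p] ip len[OF x] by simp
    also have "\<dots> = snd x" using permutes_inv_o(1)[OF assms(1)] by simp
    finally show "permv (inv p) (permv p x) = x" by (simp add: permv_def)
  qed
  show "\<forall>a\<in>?S. permv p (permv (inv p) a) = a"
  proof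
    fix x assume x: "x \<in> ?S"
    have "permute_list p (permute_list (inv p) (snd x)) = permute_list (inv p \<circ> p) (snd x)"
      using permute_list_compose[of p "snd x" "inv p"] assms(1) len[OF x] by simp
    also have "\<dots> = snd x" using permutes_inv_o(2)[OF assms(1)] by simp
    finally show "permv p (permv (inv p) x) = x" by (simp add: permv_def)
  qed
  have closed: "permv q ` ?S \<subseteq> ?S" if q: "q permutes {..<d}" for q
  proof
    fix y assume "y \<in> permv q ` ?S"
    then obtain x where x: "x \<in> ?S" "y = permv q x" by blast
    have "permute_list q (snd x) \<in> permutations_of_set (P (fst x))"
      using permute_list_ordering[of q "snd x"] x q len[OF x(1)] by auto
    then show "y \<in> ?S" using x by (auto simp: permv_def)
  qed
  then show "permv p ` ?S \<subseteq> ?S" "permv (inv p) ` ?S \<subseteq> ?S" using assms(1) ip by blast+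
qed


section \<open>The Galois closure of a regular cover\<close>

locale regular_cover =
  fixes G :: "('v,'e) pre_digraph" and G' :: "('v2,'e2) pre_digraph"
    and fv :: "'v2 \<Rightarrow> 'v" and fe :: "'e2 \<Rightarrow> 'e" and d :: nat
  assumes base: "fin_digraph G" and cover: "fin_digraph G'"
    and covering: "covering_map G' G fv fe"
    and card_vfib: "\<forall>v\<in>verts G. card {v'\<in>verts G'. fv v' = v} = d"
    and card_efib: "\<forall>e\<in>arcs G. card {e'\<in>arcs G'. fe e' = e} = d"
begin

definition vfib :: "'v \<Rightarrow> 'v2 set" where
  "vfib v = {v' \<in> verts G'. fv v' = v}"

definition efib :: "'e \<Rightarrow> 'e2 set" where
  "efib e = {e' \<in> arcs G'. fe e' = e}"

definition galois :: "('v \<times> 'v2 list, 'e \<times> 'e2 list) pre_digraph" where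
  "galois = \<lparr>verts = Sigma (verts G) (\<lambda>v. permutations_of_set (vfib v)),
     arcs = Sigma (arcs G) (\<lambda>e. permutations_of_set (efib e)),
     tail = (\<lambda>x. (tail G (fst x), map (tail G') (snd x))),
     head = (\<lambda>x. (head G (fst x), map (head G') (snd x)))\<rparr>"

lemma galois_simps [simp]:
  "verts galois = Sigma (verts G) (\<lambda>v. permutations_of_set (vfib v))"
  "arcs galois = Sigma (arcs G) (\<lambda>e. permutations_of_set (efib e))"
  "tail galois x = (tail G (fst x), map (tail G') (snd x))"
  "head galois x = (head G (fst x), map (head G') (snd x))"
  by (simp_all add: galois_def)

lemma cover_vert: "v' \<in> verts G' \<Longrightarrow> fv v' \<in> verts G"
  using covering by (simp add: covering_map_def)

lemma cover_arc:
  "e' \<in> arcs G' \<Longrightarrow> fe e' \<in> arcs G \<and> tail G (fe e') = fv (tail G' e') \<and> head G (fe e') = fv (head G' e')"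
  using covering by (simp add: covering_map_def)

lemma finite_vfib: "finite (vfib v)"
  using fin_digraph.finite_verts[OF cover] by (simp add: vfib_def)

lemma finite_efib: "finite (efib e)"
  using fin_digraph.finite_arcs[OF cover] by (simp add: efib_def)

lemma vfib_card: "v \<in> verts G \<Longrightarrow> card (vfib v) = d"
  using card_vfib by (simp add: vfib_def)

lemma efib_card: "e \<in> arcs G \<Longrightarrow> card (efib e) = d"
  using card_efib by (simp add: efib_def)

text \<open>Because phi is a covering map, taking the tail (or the head) is a bijection from the
  fibre of an edge e onto the fibre of the tail (head) of e.  The lemma is stated for an
  arbitrary endpoint map so that it covers both cases.\<close>

lemma fibre_endpoint_bij:
  fixes en :: "'e \<Rightarrow> 'v" and en' :: "'e2 \<Rightarrow> 'v2"
  assumes e: "e \<in> arcs G"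
    and compat: "\<forall>e'\<in>arcs G'. en' e' \<in> verts G' \<and> en (fe e') = fv (en' e')"
    and local_bij: "\<forall>v\<in>verts G'. bij_betw fe {x\<in>arcs G'. en' x = v} {x\<in>arcs G. en x = fv v}"
  shows "bij_betw en' (efib e) (vfib (en e))"
proof -
  have "inj_on en' (efib e)"
  proof (rule inj_onI)
    fix a b assume a: "a \<in> efib e" and b: "b \<in> efib e" and ab: "en' a = en' b"
    have "en' a \<in> verts G'" using a compat by (auto simp: efib_def)
    then have "inj_on fe {x \<in> arcs G'. en' x = en' a}" using local_bij by (auto simp: bij_betw_def)
    then show "a = b" using a b ab unfolding efib_def inj_on_def by auto
  qed
  moreover have "en' ` efib e = vfib (en e)"
  proof
    show "en' ` efib e \<subseteq> vfib (en e)" using compat by (auto simp: efib_def vfib_def)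
    show "vfib (en e) \<subseteq> en' ` efib e"
    proof
      fix v' assume "v' \<in> vfib (en e)"
      then have v': "v' \<in> verts G'" "fv v' = en e" by (auto simp: vfib_def)
      have "fe ` {x \<in> arcs G'. en' x = v'} = {x \<in> arcs G. en x = fv v'}"
        using local_bij v'(1) by (simp add: bij_betw_def)
      then have "e \<in> fe ` {x \<in> arcs G'. en' x = v'}" using e v'(2) by simp
      then show "v' \<in> en' ` efib e" by (auto simp: efib_def)
    qed
  qed
  ultimately show ?thesis by (simp add: bij_betw_def)
qed

lemma tail_fibre_bij: "e \<in> arcs G \<Longrightarrow> bij_betw (tail G') (efib e) (vfib (tail G e))"
  by (rule fibre_endpoint_bij)
    (use covering fin_digraph.axioms(1)[OF cover] in \<open>auto simp: covering_map_def wf_digraph_def\<close>)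

lemma head_fibre_bij: "e \<in> arcs G \<Longrightarrow> bij_betw (head G') (efib e) (vfib (head G e))"
  by (rule fibre_endpoint_bij)
    (use covering fin_digraph.axioms(1)[OF cover] in \<open>auto simp: covering_map_def wf_digraph_def\<close>)

lemma ordering_endpoints:
  assumes "e \<in> arcs G" "\<epsilon> \<in> permutations_of_set (efib e)"
  shows "map (tail G') \<epsilon> \<in> permutations_of_set (vfib (tail G e))"
    "map (head G') \<epsilon> \<in> permutations_of_set (vfib (head G e))"
  using tail_fibre_bij[OF assms(1)] head_fibre_bij[OF assms(1)] assms(2)
  by (auto simp: permutations_of_set_def bij_betw_def distinct_map)

lemma galois_fin_digraph: "fin_digraph galois"
proof -
  interpret G: fin_digraph G by (rule base)
  show ?thesis
    by unfold_locales (auto dest: ordering_endpoints)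
qed

lemma galois_length_vert: "x \<in> verts galois \<Longrightarrow> length (snd x) = d"
  using length_finite_permutations_of_set vfib_card by force

lemma galois_length_arc: "x \<in> arcs galois \<Longrightarrow> length (snd x) = d"
  using length_finite_permutations_of_set efib_card by force

lemma galois_card_vfib: "v \<in> verts G \<Longrightarrow> card {x \<in> verts galois. fst x = v} = fact d"
proof -
  assume v: "v \<in> verts G"
  have "{x \<in> verts galois. fst x = v} = {v} \<times> permutations_of_set (vfib v)" using v by auto
  then show ?thesis using vfib_card[OF v] finite_vfib by (simp add: card_cartesian_product_singleton)
qed

lemma galois_card_efib: "e \<in> arcs G \<Longrightarrow> card {x \<in> arcs galois. fst x = e} = fact d"
proof -
  assume e: "e \<in> arcs G"
  have "{x \<in> arcs galois. fst x = e} = {e} \<times> permutations_of_set (efib e)" using e by auto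
  then show ?thesis using efib_card[OF e] finite_efib by (simp add: card_cartesian_product_singleton)
qed

lemma fexcess_galois_pullback:
  "fexcess galois (pullback fst fst F) (\<lambda>x. Z (fst x)) = int (fact d) * fexcess G F Z"
  by (rule fexcess_pullback[OF base galois_fin_digraph])
    (use galois_card_vfib galois_card_efib ordering_endpoints in auto)

lemma sum_vfibs: "(\<Sum>v\<in>verts G. \<Sum>v'\<in>vfib v. h v') = (\<Sum>v'\<in>verts G'. h v')"
  unfolding vfib_def using fin_digraph.finite_verts[OF base] fin_digraph.finite_verts[OF cover] cover_vert
  by (intro sum.group) auto

lemma sum_efibs: "(\<Sum>e\<in>arcs G. \<Sum>e'\<in>efib e. h e') = (\<Sum>e'\<in>arcs G'. h e')"
  unfolding efib_def using fin_digraph.finite_arcs[OF base] fin_digraph.finite_arcs[OF cover] cover_arc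
  by (intro sum.group) auto

end


context regular_cover
begin

lemma cover_pullback:
  assumes "family G F U"
  shows "family G' (pullback fv fe F) (\<lambda>v. U (fv v))"
    "fexcess G' (pullback fv fe F) (\<lambda>v. U (fv v)) = int d * fexcess G F U"
proof -
  show "family G' (pullback fv fe F) (\<lambda>v. U (fv v))"
    by (rule family_pullback[OF _ assms]) (use cover_vert in blast)
  show "fexcess G' (pullback fv fe F) (\<lambda>v. U (fv v)) = int d * fexcess G F U"
    by (rule fexcess_pullback[OF base cover _ _ card_vfib card_efib]) (use cover_vert cover_arc in auto)
qed

text \<open>Lower bound: pull back a maximising family from G.\<close>

lemma max_excess_lower:
  "int d * max_excess G F \<le> max_excess G' (pullback fv fe F)"
proof -
  obtain U where U: "family G F U" "fexcess G F U = max_excess G F"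
    using fin_digraph.max_excess_attained[OF base] by blast
  then show ?thesis
    using fin_digraph.fexcess_le_max_excess[OF cover cover_pullback(1)[OF U(1)]] cover_pullback(2)[OF U(1)]
    by simp
qed

definition slice :: "nat \<Rightarrow> ('v2 \<Rightarrow> 'x set) \<Rightarrow> 'v \<times> 'v2 list \<Rightarrow> 'x set" where
  "slice i U' x = U' (snd x ! i)"

lemma family_slice:
  assumes "i < d" "family G' (pullback fv fe F) U'"
  shows "family galois (pullback fst fst F) (slice i U')"
  unfolding family_def
proof
  fix x assume x: "x \<in> verts galois"
  then have "snd x ! i \<in> set (snd x)" using galois_length_vert assms(1) by simp
  then have si: "snd x ! i \<in> verts G'" "fv (snd x ! i) = fst x"
    using x by (auto simp: permutations_of_set_def vfib_def)
  then have "stalkV (pullback fv fe F) (snd x ! i) = stalkV (pullback fst fst F) x"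
    by (simp add: stalkV_def)
  then show "fsubspace (slice i U' x) \<and> slice i U' x \<subseteq> stalkV (pullback fst fst F) x"
    using assms(2) si(1) unfolding family_def slice_def by auto
qed

lemma sections_slice:
  assumes "i < d" "x \<in> arcs galois"
  shows "sections galois (pullback fst fst F) (slice i U') x
    = sections G' (pullback fv fe F) U' (snd x ! i)"
proof -
  have "snd x ! i \<in> set (snd x)" using galois_length_arc assms by simp
  then have ei: "snd x ! i \<in> arcs G'" "fe (snd x ! i) = fst x"
    using assms(2) by (auto simp: permutations_of_set_def efib_def)
  then have ends: "tail G (fst x) = fv (tail G' (snd x ! i))" "head G (fst x) = fv (head G' (snd x ! i))"
    using cover_arc[OF ei(1)] by auto
  have "restr_h galois (pullback fst fst F) x = restr_h G' (pullback fv fe F) (snd x ! i)"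
    "restr_t galois (pullback fst fst F) x = restr_t G' (pullback fv fe F) (snd x ! i)"
    using ends ei(2) by (auto simp: restr_h_def restr_t_def fun_eq_iff)
  moreover have "slice i U' (head galois x) = U' (head G' (snd x ! i))"
    "slice i U' (tail galois x) = U' (tail G' (snd x ! i))"
    using galois_length_arc[OF assms(2)] assms(1) by (auto simp: slice_def)
  ultimately show ?thesis using ei(2) by (simp add: sections_def)
qed

lemma sum_fexcess_slices:
  "(\<Sum>i<d. fexcess galois (pullback fst fst F) (slice i U'))
    = int (fact d) * fexcess G' (pullback fv fe F) U'"
proof -
  let ?F2 = "pullback fst fst F" and ?F' = "pullback fv fe F"
  let ?g = "\<lambda>e'. int (fdim (sections G' ?F' U' e'))" and ?h = "\<lambda>v'. int (fdim (U' v'))"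
  have "int (fdim (sections galois ?F2 (slice i U') x)) = ?g (snd x ! i)"
    if "i \<in> {..<d}" "x \<in> arcs galois" for i x
    using sections_slice[of i x F U'] that by simp
  then have "(\<Sum>i<d. \<Sum>x\<in>arcs galois. int (fdim (sections galois ?F2 (slice i U') x)))
      = (\<Sum>i<d. \<Sum>x\<in>arcs galois. ?g (snd x ! i))"
    by (intro sum.cong refl) auto
  also have "\<dots> = (\<Sum>x\<in>arcs galois. \<Sum>i<d. ?g (snd x ! i))"
    by (rule sum.swap)
  also have "\<dots> = int (fact d) * (\<Sum>e'\<in>arcs G'. ?g e')"
    unfolding galois_simps sum_efibs[symmetric]
    by (rule sum_over_orderings) (use fin_digraph.finite_arcs[OF base] finite_efib efib_card in auto)
  finally have arcs: "(\<Sum>i<d. \<Sum>x\<in>arcs galois. int (fdim (sections galois ?F2 (slice i U') x)))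
      = int (fact d) * (\<Sum>e'\<in>arcs G'. ?g e')" .
  have "(\<Sum>i<d. \<Sum>x\<in>verts galois. int (fdim (slice i U' x)))
      = (\<Sum>x\<in>verts galois. \<Sum>i<d. ?h (snd x ! i))"
    unfolding slice_def by (rule sum.swap)
  also have "\<dots> = int (fact d) * (\<Sum>v'\<in>verts G'. ?h v')"
    unfolding galois_simps sum_vfibs[symmetric]
    by (rule sum_over_orderings) (use fin_digraph.finite_verts[OF base] finite_vfib vfib_card in auto)
  finally have verts: "(\<Sum>i<d. \<Sum>x\<in>verts galois. int (fdim (slice i U' x)))
      = int (fact d) * (\<Sum>v'\<in>verts G'. ?h v')" .
  show ?thesis
    unfolding fexcess_def sum_subtractf arcs verts by (simp add: right_diff_distrib)
qed

lemma galois_lower: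
  "int (fact d) * max_excess G' (pullback fv fe F) \<le> int d * max_excess galois (pullback fst fst F)"
proof -
  obtain U' where U': "family G' (pullback fv fe F) U'" "fexcess G' (pullback fv fe F) U' = max_excess G' (pullback fv fe F)"
    using fin_digraph.max_excess_attained[OF cover] by blast
  have "(\<Sum>i<d. fexcess galois (pullback fst fst F) (slice i U')) \<le> of_nat (card {..<d}) * max_excess galois (pullback fst fst F)"
    by (rule sum_bounded_above)
      (use fin_digraph.fexcess_le_max_excess[OF galois_fin_digraph family_slice[OF _ U'(1)]] in auto)
  then show ?thesis using sum_fexcess_slices[of F U'] U'(2) by simp
qed

lemma galois_automorphism:
  assumes p: "p permutes {..<d}" and U: "family galois (pullback fst fst F) U"
  shows "family galois (pullback fst fst F) (\<lambda>x. U (permv p x))"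
    "fexcess galois (pullback fst fst F) (\<lambda>x. U (permv p x)) = fexcess galois (pullback fst fst F) U"
proof -
  have bv: "bij_betw (permv p) (verts galois) (verts galois)"
    unfolding galois_simps by (rule permv_bij[OF p]) (use vfib_card in auto)
  have be: "bij_betw (permv p) (arcs galois) (arcs galois)"
    unfolding galois_simps by (rule permv_bij[OF p]) (use efib_card in auto)
  have ends: "\<forall>x\<in>arcs galois. tail galois (permv p x) = permv p (tail galois x)
      \<and> head galois (permv p x) = permv p (head galois x)"
  proof
    fix x assume x: "x \<in> arcs galois"
    have "p permutes {..<length (snd x)}" using p galois_length_arc[OF x] by simp
    then show "tail galois (permv p x) = permv p (tail galois x) \<and> head galois (permv p x) = permv p (head galois x)"
      by (simp add: permv_def permute_list_map)
  qed
  show "family galois (pullback fst fst F) (\<lambda>x. U (permv p x))"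
    "fexcess galois (pullback fst fst F) (\<lambda>x. U (permv p x)) = fexcess galois (pullback fst fst F) U"
    using fin_digraph.fexcess_automorphism[OF galois_fin_digraph bv be ends _ _ U] by (simp_all add: permv_def)
qed

text \<open>Hence a maximiser of maximal total dimension is S_d-invariant (it contains its own
  translates), i.e. constant on the fibres of H over G.\<close>

lemma invariant_maximiser:
  "\<exists>U. family galois (pullback fst fst F) U
     \<and> fexcess galois (pullback fst fst F) U = max_excess galois (pullback fst fst F)
     \<and> (\<forall>v \<sigma> \<rho>. (v,\<sigma>) \<in> verts galois \<longrightarrow> (v,\<rho>) \<in> verts galois \<longrightarrow> U (v,\<rho>) \<subseteq> U (v,\<sigma>))"
proof -
  let ?F2 = "pullback fst fst F"
  obtain U where U: "family galois ?F2 U" "fexcess galois ?F2 U = max_excess galois ?F2"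
    and Umax: "\<forall>W. family galois ?F2 W \<and> fexcess galois ?F2 W = max_excess galois ?F2
                 \<longrightarrow> total_dim galois W \<le> total_dim galois U"
    using fin_digraph.maximiser_of_max_total_dim[OF galois_fin_digraph] by blast
  have translate: "U (permv p x) \<subseteq> U x" if p: "p permutes {..<d}" and x: "x \<in> verts galois" for p x
  proof -
    have "fexcess galois ?F2 (\<lambda>x. U (permv p x)) = max_excess galois ?F2"
      using galois_automorphism(2)[OF p U(1)] U(2) by simp
    then show ?thesis
      using fin_digraph.maximiser_absorbs[OF galois_fin_digraph U Umax
          galois_automorphism(1)[OF p U(1)] _ x]
      by simp
  qed
  have "U (v,\<rho>) \<subseteq> U (v,\<sigma>)" if s: "(v,\<sigma>) \<in> verts galois" and r: "(v,\<rho>) \<in> verts galois" for v \<sigma> \<rho>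
  proof -
    have "mset \<rho> = mset \<sigma>"
      using s r set_eq_iff_mset_eq_distinct[of \<rho> \<sigma>] by (auto simp: permutations_of_set_def)
    then obtain p where p: "p permutes {..<length \<sigma>}" "permute_list p \<sigma> = \<rho>"
      using mset_eq_permutation by blast
    have "p permutes {..<d}" using p(1) galois_length_vert[OF s] by simp
    from translate[OF this s] p(2) show ?thesis by (simp add: permv_def)
  qed
  then show ?thesis using U by blast
qed

text \<open>Upper bound on H: the invariant maximiser is pulled back from a family on G.\<close>

lemma galois_upper:
  "max_excess galois (pullback fst fst F) \<le> int (fact d) * max_excess G F"
proof -
  let ?F2 = "pullback fst fst F"
  obtain U where U: "family galois ?F2 U" "fexcess galois ?F2 U = max_excess galois ?F2"
    and inv: "\<forall>v \<sigma> \<rho>. (v,\<sigma>) \<in> verts galois \<longrightarrow> (v,\<rho>) \<in> verts galois \<longrightarrow> U (v,\<rho>) \<subseteq> U (v,\<sigma>)"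
    using invariant_maximiser by blast
  define rep where "rep v = (SOME \<sigma>. \<sigma> \<in> permutations_of_set (vfib v))" for v
  have rep: "(v, rep v) \<in> verts galois" if "v \<in> verts G" for v
  proof -
    have "permutations_of_set (vfib v) \<noteq> {}" using finite_vfib by simp
    then obtain \<sigma> where "\<sigma> \<in> permutations_of_set (vfib v)" by blast
    then have "rep v \<in> permutations_of_set (vfib v)" unfolding rep_def by (rule someI)
    then show ?thesis using that by simp
  qed
  define Z where "Z v = U (v, rep v)" for v
  have UZ: "\<forall>x\<in>verts galois. U x = Z (fst x)"
  proof
    fix x assume x: "x \<in> verts galois"
    then have "(fst x, rep (fst x)) \<in> verts galois" using rep by auto
    then show "U x = Z (fst x)" using inv x unfolding Z_def by (metis prod.collapse subset_antisym)
  qed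
  have "family G F Z"
    unfolding family_def
  proof
    fix v assume v: "v \<in> verts G"
    from bspec[OF U(1)[unfolded family_def] rep[OF v]]
    show "fsubspace (Z v) \<and> Z v \<subseteq> stalkV F v" by (simp add: Z_def stalkV_def)
  qed
  have "max_excess galois ?F2 = fexcess galois ?F2 (\<lambda>x. Z (fst x))"
    using U(2) fin_digraph.fexcess_cong[OF galois_fin_digraph UZ] by simp
  also have "\<dots> = int (fact d) * fexcess G F Z" by (rule fexcess_galois_pullback)
  also have "\<dots> \<le> int (fact d) * max_excess G F"
    using fin_digraph.fexcess_le_max_excess[OF base \<open>family G F Z\<close>] by (simp add: mult_left_mono)
  finally show ?thesis .
qed

text \<open>Combining the bounds d! * m.e.(phi^*F) \<le> d * m.e.(F on H) \<le> d * d! * m.e.(F) with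
  the lower bound gives m.e.(phi^*F) = d * m.e.(F).\<close>

theorem max_excess_cover:
  "max_excess G' (pullback fv fe F) = int d * max_excess G F"
proof -
  have "int (fact d) * max_excess G' (pullback fv fe F) \<le> int d * (int (fact d) * max_excess G F)"
    using galois_lower[of F] galois_upper[of F] by (meson mult_left_mono of_nat_0_le_iff order_trans)
  then have "max_excess G' (pullback fv fe F) \<le> int d * max_excess G F"
    by (simp add: algebra_simps mult_le_cancel_left_pos)
  then show ?thesis using max_excess_lower[of F] by simp
qed

end


theorem theorem1:
  fixes G :: "('v,'e) pre_digraph" and G' :: "('v2,'e2) pre_digraph"
    and fv :: "'v2 \<Rightarrow> 'v" and fe :: "'e2 \<Rightarrow> 'e"
    and F :: "('v,'e,'k::field) sheaf" and d :: nat
  assumes "fin_digraph G" and "fin_digraph G'"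
    and "covering_map G' G fv fe"
    and "\<forall>v\<in>verts G. card {v'\<in>verts G'. fv v' = v} = d"
    and "\<forall>e\<in>arcs G. card {e'\<in>arcs G'. fe e' = e} = d"
  shows "max_excess G' (pullback fv fe F) = int d * max_excess G F
    \<and> (\<forall>Uv. (\<forall>v\<in>verts G. fsubspace (Uv v) \<and> Uv v \<subseteq> stalkV F v)
              \<and> attains_max_excess G F (dsum G F Uv)
          \<longrightarrow> attains_max_excess G' (pullback fv fe F) (dsum G' (pullback fv fe F) (\<lambda>v'. Uv (fv v'))))"
proof -
  interpret regular_cover G G' fv fe d by (rule regular_cover.intro) (fact assms)+
  have max: "max_excess G' (pullback fv fe F) = int d * max_excess G F"
    by (rule max_excess_cover)
  moreover have "attains_max_excess G' (pullback fv fe F) (dsum G' (pullback fv fe F) (\<lambda>v'. Uv (fv v')))"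
    if Uv: "family G F Uv" "attains_max_excess G F (dsum G F Uv)" for Uv
  proof -
    have "fexcess G F Uv = max_excess G F"
      using Uv fin_digraph.excess_dsum[OF base Uv(1)] by (simp add: attains_max_excess_def)
    then show ?thesis
      using fin_digraph.admissible_dsum[OF cover cover_pullback(1)[OF Uv(1)]]
        fin_digraph.excess_dsum[OF cover cover_pullback(1)[OF Uv(1)]] cover_pullback(2)[OF Uv(1)] max
      by (simp add: attains_max_excess_def)
  qed
  ultimately show ?thesis by (simp add: family_def)
qed

end
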